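(* Consider the generalized one-way trading problem (GOT) with capacity $C$ and bounds $0<L\le U$, under Assumption A. If there exists an $\alpha$-competitive online algorithm for GOT, then there exists a non-decreasing function $\psi:[L,U]\to[0,C]$ satisfying $$L\psi(L)+\int_L^p u\,d\psi(u)\ge \frac{pC}{\alpha}\ \ \text{for all }p\in[L,U],\qquad \psi(L)\ge \frac{C}{\alpha},\qquad \psi(U)\le C,$$ where the integral is a Riemann–Stieltjes integral.
   Context: GOT: a single knapsack of capacity $C$; items $n=1,\dots,N$ arrive one at a time; item $n$ has size $D_n>0$ and value function $g_n:[0,D_n]\to\mathbb R_{\ge0}$, revealed on arrival. Offline problem: $\max\sum_n g_n(y_n)$ s.t. $\sum_n y_n\le C$, $0\le y_n\le D_n$. Assumption A: each $g_n$ is non-decreasing, differentiable, concave, $g_n(0)=0$, $L\le g_n'\le U$, with $C,L,U$ known. An online algorithm irrevocably chooses $y_n$ on arrival of item $n$ using only items $1,\dots,n$ and $C,L,U$, keeping the constraints feasible; it is $\alpha$-competitive if $\mathrm{OPT}(\mathcal I)\le\alpha\,\mathrm{ALG}(\mathcal I)$ for every instance $\mathcal I$ satisfying Assumption A. *)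

theory Defs
  imports "HOL-Analysis.Analysis"
begin

text \<open>An item is a pair (D, g): size D and value function g (only its values on [0,D] matter).\<close>
type_synonym item = "real \<times> (real \<Rightarrow> real)"

definition assumpA :: "real \<Rightarrow> real \<Rightarrow> item \<Rightarrow> bool" where
  "assumpA L U it \<longleftrightarrow>
     (let D = fst it; g = snd it in
       D > 0 \<and> g 0 = 0 \<and> (\<forall>y\<in>{0..D}. g y \<ge> 0) \<and> mono_on {0..D} g \<and>
       concave_on {0..D} g \<and>
       (\<forall>y\<in>{0..D}. \<exists>g'. (g has_real_derivative g') (at y within {0..D}) \<and> L \<le> g' \<and> g' \<le> U))"

definition valid_instance :: "real \<Rightarrow> real \<Rightarrow> item list \<Rightarrow> bool" where
  "valid_instance L U I \<longleftrightarrow> (\<forall>it\<in>set I. assumpA L U it)"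

definition feasible_alloc :: "real \<Rightarrow> item list \<Rightarrow> (nat \<Rightarrow> real) \<Rightarrow> bool" where
  "feasible_alloc C I y \<longleftrightarrow>
     (\<forall>n<length I. 0 \<le> y n \<and> y n \<le> fst (I ! n)) \<and> (\<Sum>n<length I. y n) \<le> C"

definition OPT :: "real \<Rightarrow> item list \<Rightarrow> real" where
  "OPT C I = (SUP y \<in> {y. feasible_alloc C I y}. \<Sum>n<length I. snd (I ! n) (y n))"

text \<open>A deterministic online algorithm maps the prefix of items 1..n (the last being the
  current item) to the irrevocable decision y_n. The known parameters C, L, U are fixed.\<close>
type_synonym online_alg = "item list \<Rightarrow> real"

definition alg_decision :: "online_alg \<Rightarrow> item list \<Rightarrow> nat \<Rightarrow> real" where
  "alg_decision A I n = A (take (Suc n) I)"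

definition ALG :: "online_alg \<Rightarrow> item list \<Rightarrow> real" where
  "ALG A I = (\<Sum>n<length I. snd (I ! n) (alg_decision A I n))"

definition online_feasible :: "real \<Rightarrow> real \<Rightarrow> real \<Rightarrow> online_alg \<Rightarrow> bool" where
  "online_feasible C L U A \<longleftrightarrow>
     (\<forall>I. valid_instance L U I \<longrightarrow> feasible_alloc C I (alg_decision A I))"

definition competitive :: "real \<Rightarrow> real \<Rightarrow> real \<Rightarrow> real \<Rightarrow> online_alg \<Rightarrow> bool" where
  "competitive C L U \<alpha> A \<longleftrightarrow> online_feasible C L U A \<and>
     (\<forall>I. valid_instance L U I \<longrightarrow> OPT C I \<le> \<alpha> * ALG A I)"

definition RS_tagged_partition ::
  "real \<Rightarrow> real \<Rightarrow> (nat \<Rightarrow> real) \<Rightarrow> (nat \<Rightarrow> real) \<Rightarrow> nat \<Rightarrow> bool" where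
  "RS_tagged_partition a b x t n \<longleftrightarrow> x 0 = a \<and> x n = b \<and>
     (\<forall>i<n. x i \<le> t i \<and> t i \<le> x (Suc i))"

definition RS_sum ::
  "(real \<Rightarrow> real) \<Rightarrow> (real \<Rightarrow> real) \<Rightarrow> (nat \<Rightarrow> real) \<Rightarrow> (nat \<Rightarrow> real) \<Rightarrow> nat \<Rightarrow> real" where
  "RS_sum f g x t n = (\<Sum>i<n. f (t i) * (g (x (Suc i)) - g (x i)))"

definition has_RS_integral ::
  "(real \<Rightarrow> real) \<Rightarrow> (real \<Rightarrow> real) \<Rightarrow> real \<Rightarrow> real \<Rightarrow> real \<Rightarrow> bool" where
  "has_RS_integral f g a b I \<longleftrightarrow>
     (\<forall>\<epsilon>>0. \<exists>\<delta>>0. \<forall>x t n. RS_tagged_partition a b x t n \<and> (\<forall>i<n. x (Suc i) - x i < \<delta>)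
        \<longrightarrow> \<bar>RS_sum f g x t n - I\<bar> < \<epsilon>)"

end

theory Submission
  imports Defs
begin

text \<open>Offer an \<open>\<alpha>\<close>-competitive algorithm items whose values are linear with prices
  \<open>L = P\<^sub>0 \<le> P\<^sub>1 \<le> \<dots> \<le> P\<^sub>k = U\<close>, each as large as the knapsack. Competitiveness on every prefix
  forces the algorithm to spend at least \<open>(C/\<alpha>)(1 - P\<^sub>j\<^sub>-\<^sub>1/P\<^sub>j)\<close> of capacity at step \<open>j\<close>;
  for geometric prices this gives \<open>1 + k(1 - (L/U)\<^bsup>1/k\<^esup>) \<le> \<alpha>\<close>, hence \<open>1 + ln (U/L) \<le> \<alpha>\<close>
  as \<open>k \<rightarrow> \<infinity>\<close>. Then \<open>\<psi> u = (C/\<alpha>)(1 + ln (u/L))\<close> works: \<open>u d\<psi>(u) = (C/\<alpha>) du\<close>, so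
  \<open>L \<psi>(L) + \<integral>\<^sub>L\<^sup>p u d\<psi>(u) = p C/\<alpha>\<close>, and \<open>\<psi>(U) = (C/\<alpha>)(1 + ln (U/L)) \<le> C\<close>.\<close>

lemma ln_div_bounds:
  fixes a b :: real
  assumes "0 < a" "a \<le> b"
  shows "(b - a) / b \<le> ln (b / a)" and "ln (b / a) \<le> (b - a) / a"
proof -
  have "ln (a / b) \<le> a / b - 1" using assms by (intro ln_le_minus_one) simp
  then show "(b - a) / b \<le> ln (b / a)" using assms by (simp add: ln_div diff_divide_distrib)
  have "ln (b / a) \<le> b / a - 1" using assms by (intro ln_le_minus_one) simp
  then show "ln (b / a) \<le> (b - a) / a" using assms by (simp add: diff_divide_distrib)
qed

lemma tag_mul_ln_div_approx:
  fixes a b t :: real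
  assumes "0 < a" "a \<le> t" "t \<le> b"
  shows "\<bar>t * ln (b / a) - (b - a)\<bar> \<le> (b - a)\<^sup>2 / a"
proof -
  have ab: "a \<le> b" "0 < b" using assms by linarith+
  note bounds = ln_div_bounds[OF assms(1) ab(1)]
  have ln0: "0 \<le> ln (b / a)" using assms ab by simp
  have "t * ln (b / a) \<le> b * ((b - a) / a)"
    using bounds(2) ln0 assms by (intro mult_mono) auto
  also have "\<dots> = (b - a) + (b - a)\<^sup>2 / a"
    using assms by (simp add: field_simps power2_eq_square)
  finally have upper: "t * ln (b / a) \<le> (b - a) + (b - a)\<^sup>2 / a" .
  have "(b - a) - (b - a)\<^sup>2 / a \<le> (b - a) - (b - a)\<^sup>2 / b"
    using assms ab by (intro diff_left_mono divide_left_mono) auto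
  also have "\<dots> = a * ((b - a) / b)"
    using ab by (simp add: field_simps power2_eq_square)
  also have "\<dots> \<le> t * ln (b / a)"
    using bounds(1) assms ab by (intro mult_mono) auto
  finally show ?thesis using upper by (simp add: abs_le_iff)
qed

lemma RS_tagged_partition_mono:
  assumes "RS_tagged_partition a b x t n" "i \<le> j" "j \<le> n"
  shows "x i \<le> x j"
  using assms(2,3)
proof (induction j rule: dec_induct)
  case (step m)
  then have "x m \<le> t m" "t m \<le> x (Suc m)"
    using assms(1) by (auto simp: RS_tagged_partition_def)
  with step show ?case by simp
qed simp

lemma RS_sum_id_ln_error:
  fixes a b c \<delta> :: real
  assumes "0 < a" and P: "RS_tagged_partition a b x t n" and mesh: "\<forall>i<n. x (Suc i) - x i < \<delta>"
  shows "\<bar>RS_sum (\<lambda>u. u) (\<lambda>u. c * ln u) x t n - c * (b - a)\<bar> \<le> \<bar>c\<bar> * (b - a) * \<delta> / a"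
proof -
  let ?d = "\<lambda>i. x (Suc i) - x i"
  have x_ge: "a \<le> x i" if "i \<le> n" for i
    using RS_tagged_partition_mono[OF P, of 0 i] P that by (simp add: RS_tagged_partition_def)
  have tag: "x i \<le> t i" "t i \<le> x (Suc i)" if "i < n" for i
    using P that by (auto simp: RS_tagged_partition_def)
  have telescope: "(\<Sum>i<n. ?d i) = b - a"
    using sum_lessThan_telescope[of x n] P by (simp add: RS_tagged_partition_def)
  have term_error: "\<bar>t i * (c * ln (x (Suc i)) - c * ln (x i)) - c * ?d i\<bar> \<le> \<bar>c\<bar> * ?d i * \<delta> / a"
    if i: "i < n" for i
  proof -
    have xi: "0 < x i" "a \<le> x i" using x_ge[of i] i assms(1) by auto
    have "t i * (c * ln (x (Suc i)) - c * ln (x i)) - c * ?d i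
        = c * (t i * ln (x (Suc i) / x i) - ?d i)"
      using xi tag[OF i] by (simp add: ln_div algebra_simps)
    then have "\<bar>t i * (c * ln (x (Suc i)) - c * ln (x i)) - c * ?d i\<bar>
        = \<bar>c\<bar> * \<bar>t i * ln (x (Suc i) / x i) - ?d i\<bar>"
      by (simp add: abs_mult)
    also have "\<dots> \<le> \<bar>c\<bar> * ((?d i)\<^sup>2 / x i)"
      using xi tag[OF i] by (intro mult_left_mono tag_mul_ln_div_approx) auto
    also have "\<dots> \<le> \<bar>c\<bar> * (?d i * \<delta> / a)"
      using xi tag[OF i] mesh i assms(1)
      by (auto simp: power2_eq_square intro!: mult_left_mono frac_le)
    finally show ?thesis by simp
  qed
  have "\<bar>RS_sum (\<lambda>u. u) (\<lambda>u. c * ln u) x t n - c * (b - a)\<bar>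
      = \<bar>\<Sum>i<n. t i * (c * ln (x (Suc i)) - c * ln (x i)) - c * ?d i\<bar>"
    using telescope by (simp only: RS_sum_def sum_subtractf flip: sum_distrib_left)
  also have "\<dots> \<le> (\<Sum>i<n. \<bar>c\<bar> * ?d i * \<delta> / a)"
    using term_error by (intro order_trans[OF sum_abs] sum_mono) auto
  also have "\<dots> = \<bar>c\<bar> * (b - a) * \<delta> / a"
    by (simp add: telescope flip: sum_divide_distrib sum_distrib_left sum_distrib_right)
  finally show ?thesis .
qed

lemma has_RS_integral_id_ln:
  fixes a b c :: real
  assumes "0 < a" "a \<le> b"
  shows "has_RS_integral (\<lambda>u. u) (\<lambda>u. c * ln u) a b (c * (b - a))"
  unfolding has_RS_integral_def
proof (intro allI impI)
  fix \<epsilon> :: real assume "0 < \<epsilon>"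
  define K where "K = \<bar>c\<bar> * (b - a)"
  have "0 \<le> K" using assms by (simp add: K_def)
  define \<delta> where "\<delta> = \<epsilon> * a / (K + 1)"
  have "K * \<delta> / a = \<epsilon> * (K / (K + 1))"
    using assms by (simp add: \<delta>_def)
  also have "\<dots> < \<epsilon> * 1"
    using \<open>0 < \<epsilon>\<close> \<open>0 \<le> K\<close> by (intro mult_strict_left_mono) auto
  finally have "K * \<delta> / a < \<epsilon>" by simp
  moreover have "0 < \<delta>" using \<open>0 < \<epsilon>\<close> \<open>0 \<le> K\<close> assms by (simp add: \<delta>_def)
  ultimately show "\<exists>\<delta>>0. \<forall>x t n. RS_tagged_partition a b x t n \<and> (\<forall>i<n. x (Suc i) - x i < \<delta>)
      \<longrightarrow> \<bar>RS_sum (\<lambda>u. u) (\<lambda>u. c * ln u) x t n - c * (b - a)\<bar> < \<epsilon>"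
    using RS_sum_id_ln_error[OF assms(1)] unfolding K_def by (meson le_less_trans)
qed

lemma has_RS_integral_add_const:
  "has_RS_integral f (\<lambda>u. g u + k) a b I \<longleftrightarrow> has_RS_integral f g a b I"
  by (simp add: has_RS_integral_def RS_sum_def)

definition linear_instance :: "real \<Rightarrow> (nat \<Rightarrow> real) \<Rightarrow> nat \<Rightarrow> item list" where
  "linear_instance C P m = map (\<lambda>i. (C, \<lambda>y. P i * y)) [0..<m]"

lemma length_linear_instance [simp]: "length (linear_instance C P m) = m"
  by (simp add: linear_instance_def)

lemma assumpA_linear:
  assumes "0 < D" "0 \<le> L" "L \<le> q" "q \<le> U"
  shows "assumpA L U (D, \<lambda>y. q * y)"
proof -
  have "concave_on {0..D} (\<lambda>y. q * y)"
    by (rule concave_on_linorderI) (auto simp: algebra_simps)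
  moreover have "mono_on {0..D} (\<lambda>y. q * y)"
    using assms by (auto simp: mono_on_def mult_left_mono)
  moreover have "\<exists>g'. ((\<lambda>y. q * y) has_real_derivative g') (at y within {0..D}) \<and> L \<le> g' \<and> g' \<le> U"
    for y using assms by (auto intro!: exI[of _ q] derivative_eq_intros)
  ultimately show ?thesis
    using assms by (auto simp: assumpA_def)
qed

lemma valid_linear_instance:
  assumes "0 < C" "0 \<le> L" "\<forall>i<m. L \<le> P i \<and> P i \<le> U"
  shows "valid_instance L U (linear_instance C P m)"
  using assms unfolding valid_instance_def linear_instance_def
  by (auto intro!: assumpA_linear)

lemma ALG_linear_instance:
  "ALG A (linear_instance C P m) = (\<Sum>n<m. P n * A (linear_instance C P (Suc n)))"
  unfolding ALG_def alg_decision_def linear_instance_def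
  by (intro sum.cong) (simp_all add: take_map take_upt del: upt_Suc)

lemma OPT_linear_instance_ge:
  assumes "0 \<le> C" "j < m"
  shows "P j * C \<le> OPT C (linear_instance C P m)"
proof -
  let ?I = "linear_instance C P m"
  have objective: "(\<Sum>n<length ?I. snd (?I ! n) (w n)) = (\<Sum>n<m. P n * w n)" for w
    by (simp add: linear_instance_def)
  define z where "z n = (if n = j then C else 0)" for n
  have "feasible_alloc C ?I z"
    using assms by (auto simp: feasible_alloc_def linear_instance_def z_def)
  moreover have "bdd_above ((\<lambda>w. \<Sum>n<length ?I. snd (?I ! n) (w n)) ` {w. feasible_alloc C ?I w})"
  proof (rule bdd_aboveI2)
    fix w assume "w \<in> {w. feasible_alloc C ?I w}"
    then have w: "0 \<le> w n" "w n \<le> C" if "n < m" for n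
      using that by (auto simp: feasible_alloc_def linear_instance_def)
    have "P n * w n \<le> \<bar>P n\<bar> * C" if "n < m" for n
    proof -
      have "P n * w n \<le> \<bar>P n\<bar> * w n" using w[OF that] by (intro mult_right_mono) auto
      also have "\<dots> \<le> \<bar>P n\<bar> * C" using w[OF that] by (intro mult_left_mono) auto
      finally show ?thesis .
    qed
    then have "(\<Sum>n<m. P n * w n) \<le> (\<Sum>n<m. \<bar>P n\<bar> * C)"
      by (intro sum_mono) auto
    then show "(\<Sum>n<length ?I. snd (?I ! n) (w n)) \<le> (\<Sum>n<m. \<bar>P n\<bar> * C)"
      by (simp only: objective)
  qed
  ultimately have "(\<Sum>n<length ?I. snd (?I ! n) (z n)) \<le> OPT C ?I"
    unfolding OPT_def by (intro cSUP_upper) auto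
  moreover have "(\<Sum>n<length ?I. snd (?I ! n) (z n)) = P j * C"
    using assms by (simp only: objective) (simp add: z_def if_distrib cong: if_cong)
  ultimately show ?thesis by simp
qed

lemma competitive_linear_instance:
  assumes "competitive C L U \<alpha> A" "0 < C" "0 \<le> L" "\<forall>i\<le>k. L \<le> P i \<and> P i \<le> U"
  defines "y n \<equiv> A (linear_instance C P (Suc n))"
  shows "\<forall>i\<le>k. 0 \<le> y i" and "(\<Sum>i\<le>k. y i) \<le> C"
    and "\<forall>j\<le>k. P j * C \<le> \<alpha> * (\<Sum>i\<le>j. P i * y i)"
proof -
  have valid: "valid_instance L U (linear_instance C P (Suc j))" if "j \<le> k" for j
    using assms that by (intro valid_linear_instance) auto
  have decision: "alg_decision A (linear_instance C P (Suc k)) i = y i" if "i \<le> k" for i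
    using that by (simp add: alg_decision_def linear_instance_def y_def take_map take_upt del: upt_Suc)
  have "feasible_alloc C (linear_instance C P (Suc k)) (alg_decision A (linear_instance C P (Suc k)))"
    using assms(1) valid[of k] by (auto simp: competitive_def online_feasible_def)
  moreover have "(\<Sum>i\<le>k. y i) = (\<Sum>i<Suc k. alg_decision A (linear_instance C P (Suc k)) i)"
    by (simp add: lessThan_Suc_atMost decision)
  ultimately show "\<forall>i\<le>k. 0 \<le> y i" "(\<Sum>i\<le>k. y i) \<le> C"
    by (auto simp: feasible_alloc_def less_Suc_eq_le decision)
  show "\<forall>j\<le>k. P j * C \<le> \<alpha> * (\<Sum>i\<le>j. P i * y i)"
  proof (intro allI impI)
    fix j assume "j \<le> k"
    have "P j * C \<le> OPT C (linear_instance C P (Suc j))"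
      using assms(2) by (intro OPT_linear_instance_ge) auto
    also have "\<dots> \<le> \<alpha> * ALG A (linear_instance C P (Suc j))"
      using assms(1) valid[OF \<open>j \<le> k\<close>] by (auto simp: competitive_def)
    finally show "P j * C \<le> \<alpha> * (\<Sum>i\<le>j. P i * y i)"
      by (simp add: ALG_linear_instance y_def lessThan_Suc_atMost)
  qed
qed

lemma competitive_ratio_pos:
  assumes "competitive C L U \<alpha> A" "0 < C" "0 < L" "L \<le> U"
  shows "0 < \<alpha>"
proof (rule ccontr)
  let ?y = "A (linear_instance C (\<lambda>_. L) 1)"
  assume "\<not> 0 < \<alpha>"
  moreover have "0 \<le> ?y" "L * C \<le> \<alpha> * (L * ?y)"
    using competitive_linear_instance[OF assms(1,2), where k=0 and P="\<lambda>_. L"] assms by auto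
  ultimately have "\<alpha> * (L * ?y) \<le> 0"
    using assms by (intro mult_nonpos_nonneg) auto
  moreover have "0 < L * C" using assms by simp
  ultimately show False using \<open>L * C \<le> \<alpha> * (L * ?y)\<close> by linarith
qed

lemma sum_ge_of_prefix_weighted_bounds:
  fixes y P :: "nat \<Rightarrow> real"
  assumes pos: "\<forall>i\<le>k. 0 < P i" and mono: "\<forall>i<k. P i \<le> P (Suc i)"
    and prefix: "\<forall>j\<le>k. P j * c \<le> (\<Sum>i\<le>j. P i * y i)"
  shows "c * (1 + (\<Sum>i<k. 1 - P i / P (Suc i))) \<le> (\<Sum>i\<le>k. y i)"
proof -
  let ?S = "\<lambda>j. \<Sum>i\<le>j. P i * y i"
  \<comment> \<open>by the \<open>j\<close>-th bound, replacing the divisor \<open>P j\<close> by \<open>P (Suc j)\<close> lowers \<open>?S j / P j\<close> by at least \<open>c * (1 - P j / P (Suc j))\<close>\<close>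
  have invariant: "?S j / P j + c * (\<Sum>i<j. 1 - P i / P (Suc i)) \<le> (\<Sum>i\<le>j. y i)"
    if "j \<le> k" for j
    using that
  proof (induction j)
    case 0
    have "0 < P 0" using pos by simp
    then show ?case by simp
  next
    case (Suc j)
    have P: "0 < P j" "0 < P (Suc j)" "P j \<le> P (Suc j)"
      using pos mono Suc.prems by auto
    define \<Delta> where "\<Delta> = 1 / P j - 1 / P (Suc j)"
    have "P j * c * \<Delta> \<le> ?S j * \<Delta>"
      using prefix Suc.prems P by (intro mult_right_mono) (auto simp: \<Delta>_def frac_le)
    moreover have "P j * c * \<Delta> = c * (1 - P j / P (Suc j))" "?S j * \<Delta> = ?S j / P j - ?S j / P (Suc j)"
      using P by (simp_all add: \<Delta>_def field_simps)
    ultimately have "?S j / P (Suc j) + c * (1 - P j / P (Suc j)) \<le> ?S j / P j"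
      by linarith
    moreover have "?S (Suc j) / P (Suc j) = ?S j / P (Suc j) + y (Suc j)"
      using P by (simp add: field_simps)
    ultimately show ?case
      using Suc by (simp add: distrib_left)
  qed
  have "c \<le> ?S k / P k"
    using prefix pos by (simp add: field_simps)
  then show ?thesis
    using invariant[of k] by (simp add: algebra_simps)
qed

lemma competitive_ratio_ge_geometric:
  fixes k :: nat
  assumes comp: "competitive C L U \<alpha> A" and "0 < C" "0 < L" "L \<le> U" "1 \<le> k"
  shows "1 + k * (1 - exp (- ln (U / L) / k)) \<le> \<alpha>"
proof -
  define a where "a = ln (U / L)"
  define P where "P i = L * exp (real i * a / k)" for i
  define y where "y n = A (linear_instance C P (Suc n))" for n
  have "0 \<le> a" using assms by (simp add: a_def)
  have P_range: "L \<le> P i \<and> P i \<le> U" if "i \<le> k" for i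
  proof -
    have "i * a \<le> a * k"
      using \<open>0 \<le> a\<close> that by (simp add: mult.commute mult_left_mono)
    then have "0 \<le> i * a / k" "i * a / k \<le> a"
      using \<open>0 \<le> a\<close> assms(5) by (simp_all add: pos_divide_le_eq)
    moreover have "exp a = U / L"
      using assms by (simp add: a_def)
    ultimately have "1 \<le> exp (i * a / k)" "exp (i * a / k) \<le> U / L"
      by (simp, metis exp_le_cancel_iff)
    then show ?thesis
      using assms by (simp add: P_def field_simps)
  qed
  have P_pos: "0 < P i" for i
    using assms by (simp add: P_def)
  have P_ratio: "P i / P (Suc i) = exp (- a / k)" for i
    using assms by (simp add: P_def exp_diff [symmetric] field_simps)
  have "0 < \<alpha>"
    using competitive_ratio_pos[OF comp] assms by auto
  note adversary = competitive_linear_instance[OF comp \<open>0 < C\<close>, where k=k and P=P, folded y_def]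
  have "C / \<alpha> * (1 + (\<Sum>i<k. 1 - P i / P (Suc i))) \<le> (\<Sum>i\<le>k. y i)"
  proof (rule sum_ge_of_prefix_weighted_bounds)
    show "\<forall>j\<le>k. P j * (C / \<alpha>) \<le> (\<Sum>i\<le>j. P i * y i)"
      using adversary(3) P_range assms \<open>0 < \<alpha>\<close> by (auto simp: field_simps mult.commute)
    show "\<forall>i<k. P i \<le> P (Suc i)"
      using assms \<open>0 \<le> a\<close> by (auto simp: P_def divide_right_mono mult_right_mono)
  qed (use P_pos in auto)
  also have "\<dots> \<le> C"
    using adversary(2) P_range assms by auto
  finally have "C / \<alpha> * (1 + k * (1 - exp (- a / k))) \<le> C"
    by (simp add: P_ratio)
  then have "C * (1 + k * (1 - exp (- a / k))) \<le> C * \<alpha>"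
    using \<open>0 < \<alpha>\<close> by (simp add: field_simps)
  then show ?thesis
    using \<open>0 < C\<close> by (simp add: a_def)
qed

lemma competitive_ratio_ge_ln:
  assumes comp: "competitive C L U \<alpha> A" and "0 < C" "0 < L" "L \<le> U"
  shows "1 + ln (U / L) \<le> \<alpha>"
proof -
  define a where "a = ln (U / L)"
  have "0 \<le> a" using assms by (simp add: a_def)
  have lower: "1 + (a - a\<^sup>2 / (a + k)) \<le> \<alpha>" if "1 \<le> k" for k :: nat
  proof -
    have "1 + a / k \<le> exp (a / k)"
      by (rule exp_ge_add_one_self)
    then have "exp (- a / k) \<le> k / (a + k)"
      using that \<open>0 \<le> a\<close> by (simp add: exp_minus field_simps)
    then have "k * (1 - k / (a + k)) \<le> k * (1 - exp (- a / k))"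
      by (simp add: mult_left_mono)
    moreover have "a - a\<^sup>2 / (a + k) = k * (1 - k / (a + k))"
      using that \<open>0 \<le> a\<close> by (simp add: field_simps power2_eq_square)
    ultimately have "a - a\<^sup>2 / (a + k) \<le> k * (1 - exp (- a / k))"
      by simp
    then show ?thesis
      using competitive_ratio_ge_geometric[OF comp assms(2-4) that] by (simp add: a_def)
  qed
  have "(\<lambda>k. 1 + (a - a\<^sup>2 / (a + real k))) \<longlonglongrightarrow> 1 + (a - 0)"
    by (intro tendsto_intros tendsto_divide_0[OF tendsto_const] filterlim_at_top_imp_at_infinity
        filterlim_tendsto_add_at_top[OF tendsto_const] filterlim_real_sequentially)
  then have "1 + (a - 0) \<le> \<alpha>"
    by (rule LIMSEQ_le_const2) (use lower in \<open>auto intro!: exI[of _ 1]\<close>)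
  then show ?thesis by (simp add: a_def)
qed

theorem lemma2:
  fixes C L U \<alpha> :: real and A :: online_alg
  assumes "C > 0" and "0 < L" and "L \<le> U"
    and "competitive C L U \<alpha> A"
  shows "\<exists>\<psi> :: real \<Rightarrow> real.
           mono_on {L..U} \<psi> \<and> (\<forall>u\<in>{L..U}. 0 \<le> \<psi> u \<and> \<psi> u \<le> C) \<and>
           (\<forall>p\<in>{L..U}. \<exists>J. has_RS_integral (\<lambda>u. u) \<psi> L p J \<and> L * \<psi> L + J \<ge> p * C / \<alpha>) \<and>
           \<psi> L \<ge> C / \<alpha> \<and> \<psi> U \<le> C"
proof -
  have "0 < \<alpha>" and ratio: "1 + ln (U / L) \<le> \<alpha>"
    using competitive_ratio_pos competitive_ratio_ge_ln assms by blast+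
  define c where "c = C / \<alpha>"
  have "0 < c" using \<open>0 < \<alpha>\<close> assms by (simp add: c_def)
  \<comment> \<open>\<open>c * (1 + ln (u / L))\<close> on \<open>u > 0\<close>, written as a shifted multiple of \<open>ln\<close>\<close>
  define \<psi> where "\<psi> u = c * ln u + c * (1 - ln L)" for u
  have \<psi>_mono: "mono_on {L..U} \<psi>"
    using \<open>0 < c\<close> assms by (auto simp: mono_on_def \<psi>_def)
  have "\<psi> L = c" by (simp add: \<psi>_def algebra_simps)
  have "\<psi> U = c * (1 + ln (U / L))"
    using assms by (simp add: \<psi>_def ln_div algebra_simps)
  also have "\<dots> \<le> c * \<alpha>"
    using ratio \<open>0 < c\<close> by simp
  also have "\<dots> = C"
    using \<open>0 < \<alpha>\<close> by (simp add: c_def)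
  finally have "\<psi> U \<le> C" .
  moreover have "\<forall>u\<in>{L..U}. 0 \<le> \<psi> u \<and> \<psi> u \<le> C"
    using \<psi>_mono \<open>\<psi> L = c\<close> \<open>0 < c\<close> \<open>\<psi> U \<le> C\<close> assms
    by (auto dest: mono_onD[of _ \<psi> L] mono_onD[of _ \<psi> _ U])
  moreover have "\<exists>J. has_RS_integral (\<lambda>u. u) \<psi> L p J \<and> L * \<psi> L + J \<ge> p * C / \<alpha>"
    if "p \<in> {L..U}" for p
  proof (intro exI conjI)
    show "has_RS_integral (\<lambda>u. u) \<psi> L p (c * (p - L))"
      unfolding \<psi>_def has_RS_integral_add_const using assms that by (intro has_RS_integral_id_ln) auto
    have "L * \<psi> L + c * (p - L) = p * c"
      by (simp add: \<open>\<psi> L = c\<close> algebra_simps)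
    then show "L * \<psi> L + c * (p - L) \<ge> p * C / \<alpha>"
      by (simp add: c_def)
  qed
  ultimately show ?thesis
    using \<psi>_mono \<open>\<psi> L = c\<close> by (intro exI[of _ \<psi>]) (auto simp: c_def)
qed

end
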